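(* Let $r\ge5$ and let $T$ be a $K_r$-tree composed of copies $H_1,\dots,H_\vartheta$ of $K_r$. Then: (1) every clique in $T$ is contained in some $H_i$; (2) if two distinct vertices $x\ne y$ of $T$ have at least three common neighbors in $T$, then $x$ and $y$ are adjacent in $T$.
   Context: A graph $T$ is a $K_r$-tree (clique tree) of order $\vartheta$ if it is the union of $\vartheta$ copies $H_1,\dots,H_\vartheta$ of $K_r$ such that, for every $1<i\le\vartheta$, $H_i$ shares exactly one edge with $H_1\cup\cdots\cup H_{i-1}$, i.e. the common vertices of $H_i$ and $H_1\cup\cdots\cup H_{i-1}$ are exactly the two endpoints of a single edge of $H_1\cup\cdots\cup H_{i-1}$. *)

theory Defs
  imports Main
begin

text \<open>The copies H 0, ..., H (n-1) of K_r are given as vertex sets; the graph T is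
  their union: two distinct vertices are adjacent iff they lie in a common copy.\<close>

definition ct_adj :: "(nat \<Rightarrow> 'a set) \<Rightarrow> nat \<Rightarrow> 'a \<Rightarrow> 'a \<Rightarrow> bool" where
  "ct_adj H n x y \<longleftrightarrow> x \<noteq> y \<and> (\<exists>i<n. x \<in> H i \<and> y \<in> H i)"

definition ct_verts :: "(nat \<Rightarrow> 'a set) \<Rightarrow> nat \<Rightarrow> 'a set" where
  "ct_verts H n = (\<Union>i<n. H i)"

definition is_Kr_tree :: "nat \<Rightarrow> (nat \<Rightarrow> 'a set) \<Rightarrow> nat \<Rightarrow> bool" where
  "is_Kr_tree r H n \<longleftrightarrow>
     (\<forall>i<n. finite (H i) \<and> card (H i) = r) \<and>
     (\<forall>i. 0 < i \<and> i < n \<longrightarrow>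
        (\<exists>u v. ct_adj H i u v \<and> H i \<inter> ct_verts H i = {u, v}))"

definition ct_clique :: "(nat \<Rightarrow> 'a set) \<Rightarrow> nat \<Rightarrow> 'a set \<Rightarrow> bool" where
  "ct_clique H n C \<longleftrightarrow> C \<subseteq> ct_verts H n \<and> (\<forall>x\<in>C. \<forall>y\<in>C. x \<noteq> y \<longrightarrow> ct_adj H n x y)"

end

theory Submission
  imports Defs
begin

text \<open>When \<open>H m\<close> is glued to the union \<open>T\<^sub>m\<close> of the
  earlier copies along an edge \<open>uv\<close>, its only old vertices are \<open>u\<close> and \<open>v\<close>, which are
  already adjacent: so adjacency between old vertices does not change, and a new vertex is
  adjacent exactly to the other vertices of \<open>H m\<close>. Hence a clique either stays inside \<open>T\<^sub>m\<close>
  or contains a new vertex and then lies in \<open>H m\<close>; and two distinct non-adjacent vertices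
  either are both old, with the same common neighbours as in \<open>T\<^sub>m\<close>, or one is new and all
  their common neighbours lie in \<open>{u, v}\<close>.\<close>

definition glued_along_edge :: "(nat \<Rightarrow> 'a set) \<Rightarrow> nat \<Rightarrow> bool" where
  "glued_along_edge H m \<longleftrightarrow> (\<exists>u v. ct_adj H m u v \<and> H m \<inter> ct_verts H m = {u, v})"

lemma is_Kr_tree_glued_along_edge:
  "is_Kr_tree r H n \<Longrightarrow> 0 < m \<Longrightarrow> m < n \<Longrightarrow> glued_along_edge H m"
  unfolding is_Kr_tree_def glued_along_edge_def by blast

lemma ct_adj_0 [simp]: "\<not> ct_adj H 0 x y"
  unfolding ct_adj_def by simp

lemma ct_adj_Suc:
  "ct_adj H (Suc m) x y \<longleftrightarrow> ct_adj H m x y \<or> (x \<noteq> y \<and> x \<in> H m \<and> y \<in> H m)"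
  unfolding ct_adj_def by (auto simp: less_Suc_eq)

lemma ct_verts_0 [simp]: "ct_verts H 0 = {}"
  unfolding ct_verts_def by simp

lemma ct_verts_Suc [simp]: "ct_verts H (Suc m) = ct_verts H m \<union> H m"
  unfolding ct_verts_def by (auto simp: lessThan_Suc)

lemma ct_adj_sym: "ct_adj H m x y \<longleftrightarrow> ct_adj H m y x"
  unfolding ct_adj_def by auto

lemma ct_adj_in_verts: "ct_adj H m x y \<Longrightarrow> x \<in> ct_verts H m \<and> y \<in> ct_verts H m"
  unfolding ct_adj_def ct_verts_def by auto

lemma ct_adj_Suc_old_iff:
  assumes "glued_along_edge H m" "x \<in> ct_verts H m" "y \<in> ct_verts H m"
  shows "ct_adj H (Suc m) x y \<longleftrightarrow> ct_adj H m x y"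
proof
  assume new_edge: "ct_adj H (Suc m) x y"
  obtain u v where uv: "ct_adj H m u v" "H m \<inter> ct_verts H m = {u, v}"
    using assms(1) unfolding glued_along_edge_def by blast
  show "ct_adj H m x y"
  proof (rule ccontr)
    assume "\<not> ct_adj H m x y"
    with new_edge have "x \<noteq> y" "x \<in> {u, v}" "y \<in> {u, v}"
      using uv(2) assms(2,3) by (auto simp: ct_adj_Suc)
    then show False
      using uv(1) \<open>\<not> ct_adj H m x y\<close> by (auto simp: ct_adj_sym)
  qed
qed (simp add: ct_adj_Suc)

lemma ct_adj_Suc_new_iff:
  "x \<notin> ct_verts H m \<Longrightarrow> ct_adj H (Suc m) x y \<longleftrightarrow> x \<noteq> y \<and> x \<in> H m \<and> y \<in> H m"
  using ct_adj_in_verts[of H m x y] by (auto simp: ct_adj_Suc)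

lemma ct_clique_adj: "ct_clique H n C \<Longrightarrow> x \<in> C \<Longrightarrow> y \<in> C \<Longrightarrow> x \<noteq> y \<Longrightarrow> ct_adj H n x y"
  unfolding ct_clique_def by blast

lemma ct_clique_Suc_cases:
  assumes "glued_along_edge H m" "ct_clique H (Suc m) C"
  shows "ct_clique H m C \<or> C \<subseteq> H m"
proof (cases "C \<subseteq> ct_verts H m")
  case True
  have "ct_adj H m x y" if "x \<in> C" "y \<in> C" "x \<noteq> y" for x y
  proof -
    have "ct_adj H (Suc m) x y"
      using ct_clique_adj[OF assms(2) that] .
    moreover have "x \<in> ct_verts H m" "y \<in> ct_verts H m"
      using that True by auto
    ultimately show ?thesis
      by (simp add: ct_adj_Suc_old_iff[OF assms(1)])
  qed
  then have "ct_clique H m C"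
    using True unfolding ct_clique_def by blast
  then show ?thesis ..
next
  case False
  then obtain w where w: "w \<in> C" "w \<notin> ct_verts H m" by blast
  have "c \<in> H m" if "c \<in> C" for c
  proof (cases "c = w")
    case True
    then show ?thesis using w assms(2) unfolding ct_clique_def ct_verts_Suc by blast
  next
    case False
    then have "ct_adj H (Suc m) w c"
      using ct_clique_adj[OF assms(2) w(1) \<open>c \<in> C\<close>] by simp
    then show ?thesis using ct_adj_Suc_new_iff[OF w(2)] by blast
  qed
  then show ?thesis by blast
qed

lemma ct_clique_in_copy:
  assumes "n \<ge> 1" "\<And>m. 0 < m \<Longrightarrow> m < n \<Longrightarrow> glued_along_edge H m" "ct_clique H n C"
  shows "\<exists>i<n. C \<subseteq> H i"
  using assms
proof (induction n arbitrary: C rule: nat_induct_at_least)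
  case base
  then show ?case unfolding ct_clique_def by simp
next
  case (Suc n)
  have "ct_clique H n C \<or> C \<subseteq> H n"
    using Suc.prems Suc.hyps(1) by (intro ct_clique_Suc_cases) auto
  then show ?case
    using Suc.IH Suc.prems(1) less_SucI by blast
qed

lemma common_nbrs_Suc_old_eq:
  assumes "glued_along_edge H m" "x \<in> ct_verts H m" "y \<in> ct_verts H m"
    and "x \<noteq> y" "\<not> ct_adj H (Suc m) x y"
  shows "{z. ct_adj H (Suc m) x z \<and> ct_adj H (Suc m) y z} = {z. ct_adj H m x z \<and> ct_adj H m y z}"
proof -
  have "ct_adj H (Suc m) x z \<and> ct_adj H (Suc m) y z \<longleftrightarrow> ct_adj H m x z \<and> ct_adj H m y z" for z
  proof
    assume adj: "ct_adj H (Suc m) x z \<and> ct_adj H (Suc m) y z"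
    have "z \<in> ct_verts H m"
    proof (rule ccontr)
      assume "z \<notin> ct_verts H m"
      then have "x \<in> H m" "y \<in> H m"
        using adj ct_adj_Suc_new_iff[of z H m] ct_adj_sym[of H "Suc m" z] by blast+
      then show False
        using assms(4,5) by (simp add: ct_adj_Suc)
    qed
    then show "ct_adj H m x z \<and> ct_adj H m y z"
      using adj assms(2,3) by (simp add: ct_adj_Suc_old_iff[OF assms(1)])
  qed (simp add: ct_adj_Suc)
  then show ?thesis by blast
qed

lemma common_nbrs_Suc_new_subset:
  assumes "x \<notin> ct_verts H m" "x \<noteq> y" "\<not> ct_adj H (Suc m) x y"
  shows "{z. ct_adj H (Suc m) x z \<and> ct_adj H (Suc m) y z} \<subseteq> H m \<inter> ct_verts H m"
proof
  fix z assume "z \<in> {z. ct_adj H (Suc m) x z \<and> ct_adj H (Suc m) y z}"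
  then have xz: "ct_adj H (Suc m) x z" and yz: "ct_adj H (Suc m) y z"
    by simp_all
  from xz have "x \<in> H m" "z \<in> H m"
    by (simp_all add: ct_adj_Suc_new_iff[OF assms(1)])
  with assms(2,3) have "y \<notin> H m"
    by (simp add: ct_adj_Suc_new_iff[OF assms(1)])
  with yz have "ct_adj H m y z"
    by (simp add: ct_adj_Suc)
  then show "z \<in> H m \<inter> ct_verts H m"
    using \<open>z \<in> H m\<close> ct_adj_in_verts[of H m y z] by blast
qed

lemma card_common_nbrs_Suc_new_le_2:
  assumes "glued_along_edge H m" "x \<notin> ct_verts H m" "x \<noteq> y" "\<not> ct_adj H (Suc m) x y"
  shows "card {z. ct_adj H (Suc m) x z \<and> ct_adj H (Suc m) y z} \<le> 2"
proof -
  obtain u v where "H m \<inter> ct_verts H m = {u, v}"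
    using assms(1) unfolding glued_along_edge_def by blast
  then have "card {z. ct_adj H (Suc m) x z \<and> ct_adj H (Suc m) y z} \<le> card {u, v}"
    using common_nbrs_Suc_new_subset[OF assms(2-4)] by (intro card_mono) auto
  also have "\<dots> \<le> 2"
    by (simp add: card_insert_le_m1)
  finally show ?thesis .
qed

lemma card_common_nbrs_nonadjacent_le_2:
  assumes "n \<ge> 1" "\<And>m. 0 < m \<Longrightarrow> m < n \<Longrightarrow> glued_along_edge H m"
    and "x \<noteq> y" "\<not> ct_adj H n x y"
  shows "card {z. ct_adj H n x z \<and> ct_adj H n y z} \<le> 2"
  using assms
proof (induction n arbitrary: x y rule: nat_induct_at_least)
  case base
  then have "{z. ct_adj H 1 x z \<and> ct_adj H 1 y z} = {}"
    by (auto simp: ct_adj_Suc)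
  then show ?case by (metis card.empty zero_le)
next
  case (Suc n)
  have glued: "glued_along_edge H n"
    using Suc.hyps(1) Suc.prems(1) by simp
  consider "x \<in> ct_verts H n" "y \<in> ct_verts H n" | "x \<notin> ct_verts H n" | "y \<notin> ct_verts H n"
    by blast
  then show ?case
  proof cases
    case 1
    have "\<not> ct_adj H n x y"
      using Suc.prems(3) by (simp add: ct_adj_Suc)
    then have "card {z. ct_adj H n x z \<and> ct_adj H n y z} \<le> 2"
      using Suc.prems(1) by (intro Suc.IH[OF _ Suc.prems(2)]) simp_all
    then show ?thesis
      using common_nbrs_Suc_old_eq[OF glued 1 Suc.prems(2,3)] by simp
  next
    case 2
    then show ?thesis
      using card_common_nbrs_Suc_new_le_2[OF glued _ Suc.prems(2,3)] by blast
  next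
    case 3
    have "\<not> ct_adj H (Suc n) y x"
      using Suc.prems(3) by (simp add: ct_adj_sym)
    then have "card {z. ct_adj H (Suc n) y z \<and> ct_adj H (Suc n) x z} \<le> 2"
      by (rule card_common_nbrs_Suc_new_le_2[OF glued 3 Suc.prems(2)[symmetric]])
    moreover have "{z. ct_adj H (Suc n) y z \<and> ct_adj H (Suc n) x z}
        = {z. ct_adj H (Suc n) x z \<and> ct_adj H (Suc n) y z}"
      by blast
    ultimately show ?thesis by simp
  qed
qed

theorem claim4p12:
  fixes H :: "nat \<Rightarrow> 'a set" and r n :: nat
  assumes "r \<ge> 5" and "n \<ge> 1" and "is_Kr_tree r H n"
  shows "(\<forall>C. ct_clique H n C \<longrightarrow> (\<exists>i<n. C \<subseteq> H i))
       \<and> (\<forall>x y. x \<noteq> y \<and> card {z. ct_adj H n x z \<and> ct_adj H n y z} \<ge> 3 \<longrightarrow> ct_adj H n x y)"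
proof (intro conjI allI impI)
  have glued: "\<And>m. 0 < m \<Longrightarrow> m < n \<Longrightarrow> glued_along_edge H m"
    using assms(3) by (rule is_Kr_tree_glued_along_edge)
  show "\<exists>i<n. C \<subseteq> H i" if "ct_clique H n C" for C
    using ct_clique_in_copy[OF assms(2) glued that] .
  show "ct_adj H n x y"
    if "x \<noteq> y \<and> card {z. ct_adj H n x z \<and> ct_adj H n y z} \<ge> 3" for x y
    using card_common_nbrs_nonadjacent_le_2[OF assms(2) glued, of x y] that by linarith
qed

end
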